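(* Let $\mathbb{F}_2$ be the free group on $T_1,T_2$, $X=\{-1,1\}^{\mathbb{F}_2}$ with the product of uniform measures $m$ and the shift action $(gx)^h=x^{hg}$, and let $X'=\{x\in X: gx\ne x \text{ for all } g\ne e\}$. Let $g_1,\dots,g_4$ be $T_1T_2^{-1},T_1^{-1}T_2,T_2T_1^{-1},T_2^{-1}T_1$ and let $g_5,\dots,g_{16}$ be the twelve distinct elements of reduced length $4$ obtained as products of two of $g_1,\dots,g_4$. Let $B_1,\dots,B_{17}$ be Borel sets partitioning $X'$ such that for every $i\le 16$ and $x\in X'$, the points $x$ and $g_ix$ lie in different sets, and let $\kappa(x)=j$ for $x\in B_j$. For $x\in X$ let $t(x)=\{T_1x,T_2x\}$ if $x^e=1$ and $t(x)=\{T_1^{-1}x,T_2^{-1}x\}$ if $x^e=-1$, and for $x\in X'$ let $L(x)=\kappa(t(x))$. Define the secondary graph on $X$: distinct $x,y\in X'$ are adjacent iff $t(x)\cap t(y)\ne\emptyset$, and points of $X\setminus X'$ have no neighbours. Then the colouring rule "$c(x)\in L(x)$ and $c(x)\ne c(y)$ whenever $x,y$ are adjacent", with colour set $\{1,\dots,17\}$ (proper list colouring of the secondary graph), is paradoxical.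
   Context: A colouring $c:X\to\{1,\dots,17\}$ satisfies the rule if the requirement holds at $m$-almost every $x$. The rule is paradoxical if (a) some colouring (not necessarily measurable) satisfies it, and (b) there is no pair $(\mu,c)$ where $\mu$ is a finitely additive $\mathbb{F}_2$-invariant probability measure on an $\mathbb{F}_2$-invariant algebra $\mathcal{B}$ containing all $m$-measurable sets and extending $m$, and $c$ is a colouring satisfying the rule all of whose colour classes lie in $\mathcal{B}$. *)

theory Defs
  imports "HOL-Probability.Probability"
begin

datatype gen = Ga | Gb

type_synonym letter = "gen \<times> bool"  (* (s, False) = s, (s, True) = s^-1 *)

definition inv_letter :: "letter \<Rightarrow> letter" where
  "inv_letter l = (fst l, \<not> snd l)"

fun reduced :: "letter list \<Rightarrow> bool" where
  "reduced (x # y # ys) = (y \<noteq> inv_letter x \<and> reduced (y # ys))"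
| "reduced _ = True"

fun cancel :: "letter \<Rightarrow> letter list \<Rightarrow> letter list" where
  "cancel x [] = [x]"
| "cancel x (y # ys) = (if y = inv_letter x then ys else x # y # ys)"

definition wmul :: "letter list \<Rightarrow> letter list \<Rightarrow> letter list" where
  "wmul u v = foldr cancel u v"

typedef F2 = "{w :: letter list. reduced w}" morphisms word Abs_F2
  by (rule exI[of _ "[]"]) simp

definition f2mul :: "F2 \<Rightarrow> F2 \<Rightarrow> F2" where
  "f2mul g h = Abs_F2 (wmul (word g) (word h))"

definition f2one :: F2 where "f2one = Abs_F2 []"

definition f2len :: "F2 \<Rightarrow> nat" where "f2len g = length (word g)"

definition T1 :: F2 where "T1 = Abs_F2 [(Ga, False)]"
definition T2 :: F2 where "T2 = Abs_F2 [(Gb, False)]"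
definition T1i :: F2 where "T1i = Abs_F2 [(Ga, True)]"
definition T2i :: F2 where "T2i = Abs_F2 [(Gb, True)]"

section \<open>The space X = {-1,1}^F2 (True = 1, False = -1), measure and shift\<close>

definition m :: "(F2 \<Rightarrow> bool) measure" where
  "m = PiM UNIV (\<lambda>_. measure_pmf (pmf_of_set (UNIV :: bool set)))"

definition act :: "F2 \<Rightarrow> (F2 \<Rightarrow> bool) \<Rightarrow> (F2 \<Rightarrow> bool)" where
  "act g x = (\<lambda>h. x (f2mul h g))"

definition Xp :: "(F2 \<Rightarrow> bool) set" where
  "Xp = {x \<in> space m. \<forall>g. g \<noteq> f2one \<longrightarrow> act g x \<noteq> x}"

definition gs4 :: "F2 set" where
  "gs4 = {f2mul T1 T2i, f2mul T1i T2, f2mul T2 T1i, f2mul T2i T1}"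

definition gs16 :: "F2 set" where
  "gs16 = gs4 \<union> {f2mul a b | a b. a \<in> gs4 \<and> b \<in> gs4 \<and> f2len (f2mul a b) = 4}"

definition kappa :: "(nat \<Rightarrow> (F2 \<Rightarrow> bool) set) \<Rightarrow> (F2 \<Rightarrow> bool) \<Rightarrow> nat" where
  "kappa B x = (THE j. j \<in> {1..17} \<and> x \<in> B j)"

definition tset :: "(F2 \<Rightarrow> bool) \<Rightarrow> (F2 \<Rightarrow> bool) set" where
  "tset x = (if x f2one then {act T1 x, act T2 x} else {act T1i x, act T2i x})"

definition Lst :: "(nat \<Rightarrow> (F2 \<Rightarrow> bool) set) \<Rightarrow> (F2 \<Rightarrow> bool) \<Rightarrow> nat set" where
  "Lst B x = kappa B ` tset x"

definition adj :: "(F2 \<Rightarrow> bool) \<Rightarrow> (F2 \<Rightarrow> bool) \<Rightarrow> bool" where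
  "adj x y \<longleftrightarrow> x \<noteq> y \<and> x \<in> Xp \<and> y \<in> Xp \<and> tset x \<inter> tset y \<noteq> {}"

text \<open>Requirement of the rule at x (L(x) is only defined on X'; X - X' is m-null).\<close>
definition rule_at :: "(nat \<Rightarrow> (F2 \<Rightarrow> bool) set) \<Rightarrow> ((F2 \<Rightarrow> bool) \<Rightarrow> nat) \<Rightarrow> (F2 \<Rightarrow> bool) \<Rightarrow> bool" where
  "rule_at B c x \<longleftrightarrow> (x \<in> Xp \<longrightarrow> c x \<in> Lst B x) \<and> (\<forall>y. adj x y \<longrightarrow> c x \<noteq> c y)"

definition colouring :: "((F2 \<Rightarrow> bool) \<Rightarrow> nat) \<Rightarrow> bool" where
  "colouring c \<longleftrightarrow> (\<forall>x \<in> space m. c x \<in> {1..17})"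

definition satisfies_rule :: "(nat \<Rightarrow> (F2 \<Rightarrow> bool) set) \<Rightarrow> ((F2 \<Rightarrow> bool) \<Rightarrow> nat) \<Rightarrow> bool" where
  "satisfies_rule B c \<longleftrightarrow> colouring c \<and> (AE x in m. rule_at B c x)"

definition invariant_extension :: "(F2 \<Rightarrow> bool) set set \<Rightarrow> ((F2 \<Rightarrow> bool) set \<Rightarrow> real) \<Rightarrow> bool" where
  "invariant_extension A \<mu> \<longleftrightarrow>
     algebra (space m) A \<and> sets (completion m) \<subseteq> A \<and>
     (\<forall>g. \<forall>S\<in>A. act g ` S \<in> A) \<and>
     (\<forall>S\<in>A. 0 \<le> \<mu> S) \<and> \<mu> (space m) = 1 \<and>
     (\<forall>S\<in>A. \<forall>T\<in>A. S \<inter> T = {} \<longrightarrow> \<mu> (S \<union> T) = \<mu> S + \<mu> T) \<and>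
     (\<forall>g. \<forall>S\<in>A. \<mu> (act g ` S) = \<mu> S) \<and>
     (\<forall>S\<in>sets (completion m). \<mu> S = measure (completion m) S)"

definition paradoxical :: "(nat \<Rightarrow> (F2 \<Rightarrow> bool) set) \<Rightarrow> bool" where
  "paradoxical B \<longleftrightarrow>
     (\<exists>c. satisfies_rule B c) \<and>
     \<not> (\<exists>A \<mu> c. invariant_extension A \<mu> \<and> satisfies_rule B c \<and>
            (\<forall>j \<in> {1..17}. {x \<in> space m. c x = j} \<in> A))"

end

theory Submission
  imports Defs
begin

(* F2 acts freely on X', so every x in X' is g r for a base point r of its orbit and a unique g.
   Moving x by the letter s of the sign prescribed by x^e (T1 or T2 if x^e = 1, their inverses
   otherwise) for which s g is reduced gives an injection with values in t(x), and colouring x by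
   the kappa-value of its image satisfies the rule: for adjacent x, y the element carrying the
   image of x to that of y is a' b'^-1 b a^-1 for letters a, b of the sign prescribed at x and
   a', b' of the sign prescribed at y, hence trivial, contradicting injectivity, or one of
   g_1, ..., g_16, contradicting the separation property of the B_j.

   Conversely, suppose the colour classes of a colouring c satisfying the rule lie in the domain
   of an invariant extension mu. Almost every x has a letter s of its prescribed sign with
   s x in B_c(x), and x |-> s x is injective on these points: if s x = s' y with x /= y, then x
   and y are adjacent, so c(x) /= c(y), although s x lies in B_c(x) and in B_c(y). Choosing s
   so that its level sets lie in the domain of mu, this piecewise translation preserves mu and
   maps a conull set into the complement of
   Z = {z : z^T1 = z^T2 = 1, z^(T1^-1) = z^(T2^-1) = -1}, which has measure 1/16. *)

section \<open>The free group on two generators\<close>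

lemma inv_letter_inv_letter [simp]: "inv_letter (inv_letter l) = l"
  by (simp add: inv_letter_def)

lemma inv_letter_neq [simp]: "l \<noteq> inv_letter l"
  by (auto simp: inv_letter_def prod_eq_iff)

lemma reduced_ConsD: "reduced (l # w) \<Longrightarrow> reduced w"
  by (cases w) auto

lemma reduced_cancel: "reduced w \<Longrightarrow> reduced (cancel l w)"
  by (cases w) (auto dest: reduced_ConsD)

lemma wmul_Nil [simp]: "wmul [] v = v"
  and wmul_Cons [simp]: "wmul (l # u) v = cancel l (wmul u v)"
  by (simp_all add: wmul_def)

lemma wmul_append: "wmul (u @ u') v = wmul u (wmul u' v)"
  by (simp add: wmul_def)

lemma reduced_wmul: "reduced v \<Longrightarrow> reduced (wmul u v)"
  by (induction u) (auto intro: reduced_cancel)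

lemma cancel_cancel_inv: "reduced w \<Longrightarrow> cancel l (cancel (inv_letter l) w) = w"
proof (cases w)
  case (Cons l' w')
  assume "reduced w"
  then show ?thesis
    using Cons by (cases "l' = l"; cases w') auto
qed simp

lemma wmul_cancel: "reduced v \<Longrightarrow> reduced w \<Longrightarrow> wmul (cancel l v) w = cancel l (wmul v w)"
proof (cases v)
  case (Cons l' v')
  assume "reduced v" "reduced w"
  then show ?thesis
    using Cons cancel_cancel_inv[of "wmul v' w" l]
    by (auto simp: reduced_wmul dest: reduced_ConsD)
qed simp

lemma wmul_assoc: "reduced v \<Longrightarrow> reduced w \<Longrightarrow> wmul (wmul u v) w = wmul u (wmul v w)"
  by (induction u) (auto simp: wmul_cancel reduced_wmul)

lemma wmul_Nil_right: "reduced u \<Longrightarrow> wmul u [] = u"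
proof (induction u)
  case (Cons l u)
  then show ?case by (cases u) (auto dest: reduced_ConsD)
qed simp

definition winv :: "letter list \<Rightarrow> letter list" where
  "winv u = rev (map inv_letter u)"

lemma winv_wmul_cancel: "reduced v \<Longrightarrow> wmul (winv u) (wmul u v) = v"
  by (induction u arbitrary: v)
    (auto simp: winv_def wmul_append reduced_wmul cancel_cancel_inv[of _ "inv_letter _", simplified])

lemma reduced_word [simp]: "reduced (word g)"
  using word by simp

lemma word_Abs_F2: "reduced w \<Longrightarrow> word (Abs_F2 w) = w"
  by (simp add: Abs_F2_inverse)

lemma Abs_F2_eq_iff [simp]: "reduced u \<Longrightarrow> reduced v \<Longrightarrow> Abs_F2 u = Abs_F2 v \<longleftrightarrow> u = v"
  by (simp add: Abs_F2_inject)

instantiation F2 :: group_add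
begin

definition "plus_F2 = f2mul"
definition "zero_F2 = f2one"
definition "uminus_F2 g = Abs_F2 (wmul (winv (word g)) [])"
definition "minus_F2 (g :: F2) h = g + - h"

instance
proof
  fix a b c :: F2
  show "a + b + c = a + (b + c)"
    by (simp add: plus_F2_def f2mul_def word_Abs_F2 reduced_wmul wmul_assoc)
  show "0 + a = a"
    by (simp add: plus_F2_def f2mul_def zero_F2_def f2one_def word_Abs_F2 word_inverse)
  show "a + 0 = a"
    by (simp add: plus_F2_def f2mul_def zero_F2_def f2one_def word_Abs_F2 word_inverse wmul_Nil_right)
  show "- a + a = 0"
    using winv_wmul_cancel[of "[]" "word a"]
    by (simp add: plus_F2_def f2mul_def zero_F2_def uminus_F2_def f2one_def word_Abs_F2
        reduced_wmul wmul_assoc wmul_Nil_right)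
  show "a + - b = a - b"
    by (simp add: minus_F2_def)
qed

end

lemma f2mul_eq_plus: "f2mul g h = g + h"
  by (simp add: plus_F2_def)

lemma f2one_eq_zero: "f2one = 0"
  by (simp add: zero_F2_def)

lemma zero_F2_eq_Abs_F2: "(0 :: F2) = Abs_F2 []"
  by (simp add: zero_F2_def f2one_def)

lemma Abs_F2_plus [simp]: "reduced u \<Longrightarrow> reduced v \<Longrightarrow> Abs_F2 u + Abs_F2 v = Abs_F2 (wmul u v)"
  by (simp add: plus_F2_def f2mul_def word_Abs_F2)

lemma uminus_Abs_F2_letter [simp]: "- Abs_F2 [l] = Abs_F2 [inv_letter l]"
  by (simp add: uminus_F2_def word_Abs_F2 winv_def)

lemma word_letter_plus: "reduced (l # word g) \<Longrightarrow> word (Abs_F2 [l] + g) = l # word g"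
proof -
  assume reduced: "reduced (l # word g)"
  have "Abs_F2 [l] + g = Abs_F2 [l] + Abs_F2 (word g)"
    by (simp add: word_inverse)
  also have "\<dots> = Abs_F2 (cancel l (word g))"
    by simp
  also have "cancel l (word g) = l # word g"
    using reduced by (cases "word g") auto
  finally show ?thesis
    using reduced by (simp add: word_Abs_F2)
qed

lemmas T_defs = T1_def T2_def T1i_def T2i_def

lemma T_distinct: "T1 \<noteq> T2" "T1 \<noteq> T1i" "T1 \<noteq> T2i" "T2 \<noteq> T1i" "T2 \<noteq> T2i" "T1i \<noteq> T2i"
  by (simp_all add: T_defs)

lemma T_inverse: "T1i + T1 = 0" "T2i + T2 = 0" "T1 + T1i = 0" "T2 + T2i = 0"
  by (simp_all add: T_defs zero_F2_eq_Abs_F2 inv_letter_def)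

lemma infinite_UNIV_F2: "infinite (UNIV :: F2 set)"
proof -
  have reduced_power: "reduced (replicate n (Ga, False))" for n
  proof (induction n)
    case (Suc n)
    then show ?case by (cases n) (simp_all add: inv_letter_def)
  qed simp
  have "inj (\<lambda>n. Abs_F2 (replicate n (Ga, False)))"
    by (rule injI) (simp add: reduced_power)
  then have "infinite (range (\<lambda>n. Abs_F2 (replicate n (Ga, False))))"
    by (rule range_inj_infinite)
  then show ?thesis
    by (rule infinite_super[OF subset_UNIV])
qed

lemma act_act: "act g (act h x) = act (g + h) x"
  by (simp add: act_def f2mul_eq_plus add.assoc)

lemma act_zero [simp]: "act 0 x = x"
  by (simp add: act_def f2mul_eq_plus)

lemma act_apply: "act g x h = x (h + g)"
  by (simp add: act_def f2mul_eq_plus)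

lemma space_m [simp]: "space m = UNIV"
  by (auto simp: m_def space_PiM)

lemma Xp_iff: "x \<in> Xp \<longleftrightarrow> (\<forall>g. act g x = x \<longrightarrow> g = 0)"
  by (auto simp: Xp_def f2one_eq_zero)

lemma Xp_act_eqD:
  assumes "x \<in> Xp" "act g x = act h x"
  shows "g = h"
proof -
  have "act (- h) (act g x) = x"
    using assms(2) by (simp add: act_act)
  then have "- h + g = 0"
    using assms(1) by (simp add: act_act Xp_iff)
  then show ?thesis
    by (metis add_minus_cancel add_0_right)
qed

lemma act_in_Xp:
  assumes "x \<in> Xp"
  shows "act g x \<in> Xp"
  unfolding Xp_iff
proof (intro allI impI)
  fix h assume "act h (act g x) = act g x"
  then have "h + g = g"
    using Xp_act_eqD[OF assms] by (simp add: act_act)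
  then show "h = 0"
    using add_right_imp_eq[of h g 0] by simp
qed

definition steps :: "bool \<Rightarrow> F2 set" where
  "steps p = (if p then {T1, T2} else {T1i, T2i})"

lemma tset_eq: "tset x = (\<lambda>s. act s x) ` steps (x 0)"
  by (auto simp: tset_def steps_def f2one_eq_zero)

lemma gs16_eq: "gs16 = {
    Abs_F2 [(Ga,False),(Gb,True)], Abs_F2 [(Ga,True),(Gb,False)],
    Abs_F2 [(Gb,False),(Ga,True)], Abs_F2 [(Gb,True),(Ga,False)],
    Abs_F2 [(Ga,False),(Gb,True),(Ga,False),(Gb,True)], Abs_F2 [(Ga,False),(Gb,True),(Ga,True),(Gb,False)],
    Abs_F2 [(Ga,False),(Gb,True),(Gb,True),(Ga,False)], Abs_F2 [(Ga,True),(Gb,False),(Ga,False),(Gb,True)],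
    Abs_F2 [(Ga,True),(Gb,False),(Ga,True),(Gb,False)], Abs_F2 [(Ga,True),(Gb,False),(Gb,False),(Ga,True)],
    Abs_F2 [(Gb,False),(Ga,True),(Ga,True),(Gb,False)], Abs_F2 [(Gb,False),(Ga,True),(Gb,False),(Ga,True)],
    Abs_F2 [(Gb,False),(Ga,True),(Gb,True),(Ga,False)], Abs_F2 [(Gb,True),(Ga,False),(Ga,False),(Gb,True)],
    Abs_F2 [(Gb,True),(Ga,False),(Gb,False),(Ga,True)], Abs_F2 [(Gb,True),(Ga,False),(Gb,True),(Ga,False)]}"
  unfolding gs16_def gs4_def f2mul_eq_plus T_defs f2len_def
  by (auto simp: inv_letter_def word_Abs_F2 conj_disj_distribR conj_disj_distribL ex_disj_distrib)

lemma step_quotient_in_gs16: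
  assumes "a \<in> steps p" "b \<in> steps p" "a' \<in> steps q" "b' \<in> steps q"
  shows "a' + - b' + b + - a \<in> insert 0 gs16"
  using assms unfolding gs16_eq steps_def zero_F2_eq_Abs_F2
  by (cases p; cases q; auto simp: T_defs inv_letter_def simp del: add_uminus_conv_diff)

section \<open>An injective choice of one point of t(x)\<close>

definition orbit_rep :: "(F2 \<Rightarrow> bool) \<Rightarrow> (F2 \<Rightarrow> bool)" where
  "orbit_rep x = (SOME y. \<exists>g. y = act g x)"

definition orbit_coord :: "(F2 \<Rightarrow> bool) \<Rightarrow> F2" where
  "orbit_coord x = (SOME g. act g (orbit_rep x) = x)"

lemma orbit_rep_act: "orbit_rep (act h x) = orbit_rep x"
proof -
  have "(\<exists>g. y = act g (act h x)) \<longleftrightarrow> (\<exists>g. y = act g x)" for y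
    by (auto simp: act_act) (metis diff_add_cancel)
  then show ?thesis
    by (simp add: orbit_rep_def)
qed

lemma orbit_rep_in_orbit: "\<exists>g. orbit_rep x = act g x"
  unfolding orbit_rep_def by (rule someI_ex[of "\<lambda>y. \<exists>g. y = act g x"]) (metis act_zero)

lemma orbit_rep_in_Xp: "x \<in> Xp \<Longrightarrow> orbit_rep x \<in> Xp"
  using orbit_rep_in_orbit[of x] act_in_Xp by auto

lemma act_orbit_coord: "act (orbit_coord x) (orbit_rep x) = x"
proof -
  obtain g where "orbit_rep x = act g x"
    using orbit_rep_in_orbit by blast
  then have "act (- g) (orbit_rep x) = x"
    by (simp add: act_act)
  then show ?thesis
    unfolding orbit_coord_def by (rule someI)
qed

lemma orbit_coord_eqI: "x \<in> Xp \<Longrightarrow> act g (orbit_rep x) = x \<Longrightarrow> orbit_coord x = g"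
  using Xp_act_eqD[OF orbit_rep_in_Xp, of x g "orbit_coord x"] act_orbit_coord[of x] by simp

text \<open>The letter \<open>(Ga, \<not> x 0)\<close> is T1 if \<open>x 0\<close> holds and T1^-1 otherwise.\<close>

definition next_letter :: "(F2 \<Rightarrow> bool) \<Rightarrow> letter" where
  "next_letter x =
    (if reduced ((Ga, \<not> x 0) # word (orbit_coord x)) then (Ga, \<not> x 0) else (Gb, \<not> x 0))"

definition advance :: "(F2 \<Rightarrow> bool) \<Rightarrow> (F2 \<Rightarrow> bool)" where
  "advance x = act (Abs_F2 [next_letter x]) x"

lemma reduced_next_letter: "reduced (next_letter x # word (orbit_coord x))"
  using reduced_word[of "orbit_coord x"]
  by (cases "word (orbit_coord x)") (auto simp: next_letter_def inv_letter_def)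

lemma next_letter_in_steps: "Abs_F2 [next_letter x] \<in> steps (x 0)"
  by (cases "x 0") (auto simp: next_letter_def steps_def T_defs)

lemma advance_in_tset: "advance x \<in> tset x"
  using next_letter_in_steps by (auto simp: advance_def tset_eq)

lemma advance_in_Xp: "x \<in> Xp \<Longrightarrow> advance x \<in> Xp"
  by (simp add: advance_def act_in_Xp)

lemma word_orbit_coord_advance:
  assumes "x \<in> Xp"
  shows "word (orbit_coord (advance x)) = next_letter x # word (orbit_coord x)"
proof -
  have "act (Abs_F2 [next_letter x] + orbit_coord x) (orbit_rep (advance x)) = advance x"
    by (simp add: advance_def orbit_rep_act act_act[symmetric] act_orbit_coord)
  then have "orbit_coord (advance x) = Abs_F2 [next_letter x] + orbit_coord x"
    by (rule orbit_coord_eqI[OF advance_in_Xp[OF assms]])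
  then show ?thesis
    by (simp add: word_letter_plus reduced_next_letter)
qed

lemma inj_on_advance: "inj_on advance Xp"
proof (rule inj_onI)
  fix x y assume x: "x \<in> Xp" and y: "y \<in> Xp" and eq: "advance x = advance y"
  have "orbit_rep x = orbit_rep y"
    using arg_cong[OF eq, of orbit_rep] by (simp add: advance_def orbit_rep_act)
  moreover have "orbit_coord x = orbit_coord y"
    using arg_cong[OF eq, of "\<lambda>z. word (orbit_coord z)"]
    by (simp add: word_orbit_coord_advance x y word_inject)
  ultimately show "x = y"
    by (metis act_orbit_coord)
qed

section \<open>A colouring satisfying the rule\<close>

locale Xp_partition =
  fixes B :: "nat \<Rightarrow> (F2 \<Rightarrow> bool) set"
  assumes disj: "\<And>j k. j \<in> {1..17} \<Longrightarrow> k \<in> {1..17} \<Longrightarrow> j \<noteq> k \<Longrightarrow> B j \<inter> B k = {}"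
    and cover: "(\<Union>j\<in>{1..17}. B j) = Xp"
begin

lemma
  assumes "u \<in> Xp"
  shows kappa_range: "kappa B u \<in> {1..17}" and in_B_kappa: "u \<in> B (kappa B u)"
proof -
  obtain j where j: "j \<in> {1..17}" "u \<in> B j"
    using assms cover by blast
  then have "kappa B u = j"
    unfolding kappa_def using disj by (intro the_equality) blast+
  then show "kappa B u \<in> {1..17}" "u \<in> B (kappa B u)"
    using j by simp_all
qed

lemma colouring_exists:
  assumes sep: "\<And>g x j. g \<in> gs16 \<Longrightarrow> j \<in> {1..17} \<Longrightarrow> x \<in> Xp \<Longrightarrow> \<not> (x \<in> B j \<and> act g x \<in> B j)"
  shows "\<exists>c. satisfies_rule B c"
proof -
  define c where "c x = (if x \<in> Xp then kappa B (advance x) else 1)" for x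
  have "c x \<noteq> c y" if "adj x y" for x y
  proof
    assume same: "c x = c y"
    have x: "x \<in> Xp" and y: "y \<in> Xp" and "x \<noteq> y" and "tset x \<inter> tset y \<noteq> {}"
      using \<open>adj x y\<close> by (auto simp: adj_def)
    then obtain b b' where b: "b \<in> steps (x 0)" and b': "b' \<in> steps (y 0)"
      and meet: "act b x = act b' y"
      by (auto simp: tset_eq)
    obtain a where a: "a \<in> steps (x 0)" "advance x = act a x"
      using advance_in_tset[of x] by (auto simp: tset_eq)
    obtain a' where a': "a' \<in> steps (y 0)" "advance y = act a' y"
      using advance_in_tset[of y] by (auto simp: tset_eq)
    have "act (a' + - b' + b + - a) (advance x) = act (a' + - b') (act b x)"
      using a(2) by (simp add: act_act)
    also have "\<dots> = advance y"
      using meet a'(2) by (simp add: act_act)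
    finally have translate: "act (a' + - b' + b + - a) (advance x) = advance y" .
    moreover have "advance x \<noteq> advance y"
      using inj_on_advance x y \<open>x \<noteq> y\<close> by (auto dest: inj_onD)
    ultimately have in_gs16: "a' + - b' + b + - a \<in> gs16"
      using step_quotient_in_gs16[OF a(1) b a'(1) b'] by auto
    have cx: "c x = kappa B (advance x)" and cy: "c y = kappa B (advance y)"
      using x y by (simp_all add: c_def)
    have "c x \<in> {1..17}" "advance x \<in> B (c x)" "advance y \<in> B (c x)"
      using kappa_range[OF advance_in_Xp[OF x]] in_B_kappa[OF advance_in_Xp[OF x]]
        in_B_kappa[OF advance_in_Xp[OF y]] cx cy same
      by simp_all
    then show False
      using sep[OF in_gs16 _ advance_in_Xp[OF x]] translate by auto
  qed
  then have "rule_at B c x" for x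
    using advance_in_tset by (auto simp: rule_at_def c_def Lst_def)
  moreover have "colouring c"
    using kappa_range advance_in_Xp by (simp add: colouring_def c_def)
  ultimately show ?thesis
    unfolding satisfies_rule_def by blast
qed

end

section \<open>The product measure\<close>

instance gen :: countable
  by (rule countable_classI[of "\<lambda>g. case g of Ga \<Rightarrow> 0 | Gb \<Rightarrow> Suc 0"]) (auto split: gen.splits)

instance F2 :: countable
  by (rule countable_classI[of "\<lambda>g. to_nat (word g)"]) (simp add: word_inject)

interpretation coin_tosses: product_prob_space "\<lambda>_::F2. measure_pmf (pmf_of_set (UNIV :: bool set))" UNIV
  by unfold_locales

interpretation m: prob_space m
  unfolding m_def by (rule coin_tosses.prob_space_axioms)

lemma sets_m_coord: "{x. P (x h)} \<in> sets m"
proof -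
  have "{x \<in> space m. P (x h)} \<in> sets m"
    unfolding m_def by (rule sets_Collect_single') auto
  then show ?thesis
    by simp
qed

lemma sets_m_cylinder: "{x. \<forall>j\<in>J. P j (x j)} \<in> sets m"
  using sets.sets_Collect_countable_Ball[of m "\<lambda>j x. P j (x j)" J] sets_m_coord by simp

lemma sets_m_coord_eq: "{x. x g = x h} \<in> sets m"
proof -
  have "{x. x g = x h} = {x. x g} \<inter> {x. x h} \<union> {x. \<not> x g} \<inter> {x. \<not> x h}"
    by auto
  then show ?thesis
    using sets_m_coord[of Not] sets_m_coord[of "\<lambda>b. b"] by simp
qed

lemma measure_m_cylinder: "finite J \<Longrightarrow> measure m {x. \<forall>j\<in>J. x j = t j} = (1/2) ^ card J"
proof -
  assume J: "finite J"
  have "emeasure m {x \<in> space m. \<forall>j\<in>J. x j \<in> {t j}} =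
      (\<Prod>j\<in>J. emeasure (measure_pmf (pmf_of_set UNIV)) {t j})"
    unfolding m_def by (rule coin_tosses.emeasure_PiM_Collect) (use J in auto)
  also have "\<dots> = ennreal ((1/2) ^ card J)"
  proof -
    have half: "emeasure (measure_pmf (pmf_of_set UNIV)) {b :: bool} = ennreal (1/2)" for b
      by (simp add: emeasure_pmf_single)
    show ?thesis
      unfolding half prod_constant by (rule ennreal_power) simp
  qed
  finally show ?thesis
    by (simp add: measure_def)
qed

lemma measurable_act: "act g \<in> m \<rightarrow>\<^sub>M m"
  unfolding m_def act_def by (rule measurable_PiM_single') (auto simp: space_PiM)

text \<open>A point of the set below is determined on \<open>H \<union> \<rho> ` H\<close> by its restriction to \<open>H\<close>,
  so the set is covered by \<open>2 ^ card H\<close> cylinders of measure \<open>(1/2) ^ (2 * card H)\<close>.\<close>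

lemma measure_coord_pairs_eq_le:
  assumes H: "finite H" and inj: "inj_on \<rho> H" and disjoint: "\<rho> ` H \<inter> H = {}"
  shows "measure m {x. \<forall>h\<in>H. x h = x (\<rho> h)} \<le> (1/2) ^ card H"
proof -
  define J where "J = H \<union> \<rho> ` H"
  define ext where "ext s j = (if j \<in> H then s j else s (the_inv_into H \<rho> j))" for s :: "F2 \<Rightarrow> bool" and j
  define C where "C s = {x. \<forall>j\<in>J. x j = ext s j}" for s
  let ?S = "PiE H (\<lambda>_. UNIV :: bool set)"
  have J: "finite J" "card J = card H + card H"
    unfolding J_def using H disjoint inj by (simp, subst card_Un_disjoint) (auto simp: card_image)
  have "{x. \<forall>h\<in>H. x h = x (\<rho> h)} \<subseteq> (\<Union>s\<in>?S. C s)"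
  proof
    fix x :: "F2 \<Rightarrow> bool" assume "x \<in> {x. \<forall>h\<in>H. x h = x (\<rho> h)}"
    then have "x \<in> C (restrict x H)"
      unfolding C_def ext_def J_def using disjoint inj by (auto simp: the_inv_into_f_f)
    then show "x \<in> (\<Union>s\<in>?S. C s)"
      by force
  qed
  moreover have C_sets: "C s \<in> sets m" for s
    using sets_m_cylinder[of J "\<lambda>j b. b = ext s j"] by (simp add: C_def)
  ultimately have "measure m {x. \<forall>h\<in>H. x h = x (\<rho> h)} \<le> measure m (\<Union>s\<in>?S. C s)"
    using H by (intro m.finite_measure_mono) (auto simp: finite_PiE)
  also have "\<dots> \<le> (\<Sum>s\<in>?S. measure m (C s))"
    using H C_sets by (intro m.finite_measure_subadditive_finite) (auto simp: finite_PiE)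
  also have "\<dots> = 2 ^ card H * (1/2) ^ (card H + card H)"
    using H J by (simp add: C_def measure_m_cylinder card_PiE)
  also have "\<dots> = (1/2) ^ card H"
    by (simp add: power_add power_mult_distrib[symmetric])
  finally show ?thesis .
qed

lemma finite_set_disjoint_from_translate:
  fixes g :: "'a :: group_add"
  assumes "infinite (UNIV :: 'a set)" "g \<noteq> 0"
  shows "\<exists>H. finite H \<and> card H = n \<and> (\<lambda>h. h + g) ` H \<inter> H = {}"
proof (induction n)
  case 0
  show ?case by auto
next
  case (Suc n)
  then obtain H where H: "finite H" "card H = n" "(\<lambda>h. h + g) ` H \<inter> H = {}"
    by blast
  have "finite (H \<union> (\<lambda>h. h + g) ` H \<union> (\<lambda>h. h - g) ` H)"
    using H(1) by simp
  then obtain h where h: "h \<notin> H \<union> (\<lambda>h. h + g) ` H \<union> (\<lambda>h. h - g) ` H"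
    using ex_new_if_finite[OF assms(1)] by meson
  have "h + g \<noteq> h"
  proof
    assume "h + g = h"
    then have "h + g = h + 0"
      by simp
    then show False
      using assms(2) add_left_imp_eq by blast
  qed
  moreover have "h + g \<notin> H"
  proof
    assume "h + g \<in> H"
    then have "h + g - g \<in> (\<lambda>h. h - g) ` H"
      by (rule imageI)
    then show False
      using h by simp
  qed
  moreover have "h \<notin> (\<lambda>h. h + g) ` H"
    using h by blast
  ultimately have "(\<lambda>h. h + g) ` insert h H \<inter> insert h H = {}"
    using H(3) by auto
  moreover have "card (insert h H) = Suc n"
    using H(1,2) h by simp
  ultimately show ?case
    using H(1) by (intro exI[of _ "insert h H"]) simp
qed

lemma fixpoints_null: assumes "g \<noteq> 0" shows "{x. act g x = x} \<in> null_sets m"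
proof -
  have fix_eq: "{x. act g x = x} = {x. \<forall>h. x h = x (h + g)}"
    by (auto simp: act_apply fun_eq_iff)
  have "measure m {x. act g x = x} \<le> (1/2) ^ n" for n
  proof -
    obtain H where H: "finite H" "card H = n" "(\<lambda>h. h + g) ` H \<inter> H = {}"
      using finite_set_disjoint_from_translate[OF infinite_UNIV_F2 assms] by blast
    have "{x. \<forall>h\<in>H. x h = x (h + g)} \<in> sets m"
      using sets.sets_Collect_countable_Ball[of m "\<lambda>h x. x h = x (h + g)" H]
      by (simp add: sets_m_coord_eq)
    then have "measure m {x. act g x = x} \<le> measure m {x. \<forall>h\<in>H. x h = x (h + g)}"
      by (rule m.finite_measure_mono[rotated]) (auto simp: fix_eq)
    also have "\<dots> \<le> (1/2) ^ n"
      using measure_coord_pairs_eq_le[OF H(1) _ H(3)] H(2) by (simp add: inj_on_def)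
    finally show ?thesis .
  qed
  then have "measure m {x. act g x = x} \<le> 0"
    by (intro LIMSEQ_le_const[OF LIMSEQ_power_zero[of "1/2 :: real"]]) auto
  then have "measure m {x. act g x = x} = 0"
    using measure_nonneg[of m] by (rule antisym)
  moreover have "{x. act g x = x} \<in> sets m"
    using sets.sets_Collect_countable_All[of m "\<lambda>h x. x h = x (h + g)"]
    by (simp add: fix_eq sets_m_coord_eq)
  ultimately show ?thesis
    by (simp add: m.emeasure_eq_measure null_sets_def)
qed

lemma AE_Xp: "AE x in m. x \<in> Xp"
proof (rule AE_I')
  show "(\<Union>g\<in>- {0}. {x. act g x = x}) \<in> null_sets m"
    using fixpoints_null by (intro null_sets_UN' countableI_type) simp
  show "{x \<in> space m. x \<notin> Xp} \<subseteq> (\<Union>g\<in>- {0}. {x. act g x = x})"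
    unfolding Xp_iff by auto
qed

definition untargeted :: "(F2 \<Rightarrow> bool) set" where
  "untargeted = {z. z T1 \<and> z T2 \<and> \<not> z T1i \<and> \<not> z T2i}"

text \<open>The point \<open>act s x\<close> takes the value \<open>x 0\<close> at \<open>- s\<close>.\<close>

lemma step_notin_untargeted: "s \<in> steps (x 0) \<Longrightarrow> act s x \<notin> untargeted"
  by (cases "x 0") (auto simp: steps_def untargeted_def act_apply T_inverse)

lemma sets_m_untargeted: "untargeted \<in> sets m"
  and measure_m_untargeted: "measure m untargeted = 1/16"
proof -
  have eq: "untargeted = {x. \<forall>j\<in>{T1, T2, T1i, T2i}. x j = (j = T1 \<or> j = T2)}"
    using T_distinct by (auto simp: untargeted_def)
  show "untargeted \<in> sets m"
    using sets_m_cylinder[of "{T1, T2, T1i, T2i}" "\<lambda>j b. b = (j = T1 \<or> j = T2)"] by (simp add: eq)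
  have "measure m untargeted = (1/2) ^ card {T1, T2, T1i, T2i}"
    unfolding eq by (rule measure_m_cylinder) simp
  then show "measure m untargeted = 1/16"
    using T_distinct by simp
qed

section \<open>No colouring measurable for an invariant extension\<close>

lemma
  assumes "invariant_extension A \<mu>"
  shows invariant_extension_algebra: "algebra UNIV A"
    and invariant_extension_sets_m: "S \<in> sets m \<Longrightarrow> S \<in> A"
    and invariant_extension_measure_m: "S \<in> sets m \<Longrightarrow> \<mu> S = measure m S"
    and invariant_extension_nonneg: "S \<in> A \<Longrightarrow> 0 \<le> \<mu> S"
    and invariant_extension_additive: "S \<in> A \<Longrightarrow> T \<in> A \<Longrightarrow> S \<inter> T = {} \<Longrightarrow> \<mu> (S \<union> T) = \<mu> S + \<mu> T"
    and invariant_extension_act: "S \<in> A \<Longrightarrow> act g ` S \<in> A"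
    and invariant_extension_measure_act: "S \<in> A \<Longrightarrow> \<mu> (act g ` S) = \<mu> S"
  using assms sets_completionI_sets[of S m] unfolding invariant_extension_def by auto

lemma invariant_extension_mono:
  assumes ext: "invariant_extension A \<mu>" and "S \<in> A" "T \<in> A" "S \<subseteq> T"
  shows "\<mu> S \<le> \<mu> T"
proof -
  interpret algebra UNIV A
    by (rule invariant_extension_algebra[OF ext])
  have "\<mu> T = \<mu> (S \<union> (T - S))"
    using assms(4) by (simp add: Un_absorb1)
  also have "\<dots> = \<mu> S + \<mu> (T - S)"
    using assms(2,3) by (intro invariant_extension_additive[OF ext]) auto
  finally show ?thesis
    using invariant_extension_nonneg[OF ext Diff[OF assms(3,2)]] by simp
qed

lemma invariant_extension_finite_UN:
  assumes ext: "invariant_extension A \<mu>"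
    and "finite I" "P ` I \<subseteq> A" "disjoint_family_on P I"
  shows "\<mu> (\<Union>i\<in>I. P i) = (\<Sum>i\<in>I. \<mu> (P i))"
proof -
  interpret algebra UNIV A
    by (rule invariant_extension_algebra[OF ext])
  have "\<mu> {} = 0"
    using invariant_extension_measure_m[OF ext, of "{}"] by simp
  then have "positive A (\<lambda>S. ennreal (\<mu> S))"
    by (simp add: positive_def)
  moreover have "additive A (\<lambda>S. ennreal (\<mu> S))"
    by (simp add: additive_def invariant_extension_additive[OF ext] invariant_extension_nonneg[OF ext] ennreal_plus)
  ultimately have "ennreal (\<mu> (\<Union>i\<in>I. P i)) = (\<Sum>i\<in>I. ennreal (\<mu> (P i)))"
    by (rule additive_sum[OF _ _ assms(2-4), symmetric])
  also have "\<dots> = ennreal (\<Sum>i\<in>I. \<mu> (P i))"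
    using assms(3) invariant_extension_nonneg[OF ext] by (intro sum_ennreal) auto
  finally have "ennreal (\<mu> (\<Union>i\<in>I. P i)) = ennreal (\<Sum>i\<in>I. \<mu> (P i))" .
  moreover have "(\<Union>i\<in>I. P i) \<in> A"
    using assms(2,3) by (intro finite_UN) auto
  ultimately show ?thesis
    using assms(3) invariant_extension_nonneg[OF ext] by (simp add: sum_nonneg image_subset_iff)
qed

lemma invariant_extension_piecewise_act:
  assumes ext: "invariant_extension A \<mu>"
    and "finite I" "P ` I \<subseteq> A" "disjoint_family_on P I"
    and "disjoint_family_on (\<lambda>s. act s ` P s) I"
  shows "\<mu> (\<Union>s\<in>I. act s ` P s) = \<mu> (\<Union>s\<in>I. P s)"
proof -
  have "(\<lambda>s. act s ` P s) ` I \<subseteq> A"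
    using assms(3) invariant_extension_act[OF ext] by auto
  then have "\<mu> (\<Union>s\<in>I. act s ` P s) = (\<Sum>s\<in>I. \<mu> (act s ` P s))"
    by (rule invariant_extension_finite_UN[OF ext assms(2) _ assms(5)])
  also have "\<dots> = (\<Sum>s\<in>I. \<mu> (P s))"
    using assms(3) invariant_extension_measure_act[OF ext] by (auto intro: sum.cong)
  also have "\<dots> = \<mu> (\<Union>s\<in>I. P s)"
    using assms(2-4) by (rule invariant_extension_finite_UN[OF ext, symmetric])
  finally show ?thesis .
qed

context Xp_partition
begin

lemma moved_pieces_disjoint:
  assumes "disjoint_family_on P I" and c_range: "\<And>x. c x \<in> {1..17}"
    and good: "\<And>s x. s \<in> I \<Longrightarrow> x \<in> P s \<Longrightarrow>
      x \<in> Xp \<and> rule_at B c x \<and> s \<in> steps (x 0) \<and> act s x \<in> B (c x)"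
  shows "disjoint_family_on (\<lambda>s. act s ` P s) I"
  unfolding disjoint_family_on_def
proof (intro ballI impI equals0I)
  fix s s' z assume s: "s \<in> I" "s' \<in> I" "s \<noteq> s'" and "z \<in> act s ` P s \<inter> act s' ` P s'"
  then obtain x y where x: "x \<in> P s" and y: "y \<in> P s'" and meet: "act s x = act s' y"
    by auto
  have "x \<noteq> y"
    using assms(1) s x y by (auto simp: disjoint_family_on_def)
  then have "adj x y"
    using good[OF s(1) x] good[OF s(2) y] meet by (auto simp: adj_def tset_eq)
  then have "c x \<noteq> c y"
    using good[OF s(1) x] by (simp add: rule_at_def)
  then show False
    using disj[of "c x" "c y"] c_range good[OF s(1) x] good[OF s(2) y] meet by auto
qed

text \<open>The step is chosen by priority, so that each piece is a Boolean combination of sets in A.\<close>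

lemma step_partition:
  assumes A: "algebra UNIV A" "sets m \<subseteq> A"
    and borel: "\<And>j. j \<in> {1..17} \<Longrightarrow> B j \<in> sets m"
    and classes: "\<And>j. j \<in> {1..17} \<Longrightarrow> {x. c x = j} \<in> A" and c_range: "\<And>x. c x \<in> {1..17}"
    and G: "G \<in> A" "\<And>x. x \<in> G \<Longrightarrow> x \<in> Xp \<and> c x \<in> Lst B x"
  obtains P where "P ` (steps True \<union> steps False) \<subseteq> A" "disjoint_family_on P (steps True \<union> steps False)"
    "G = (\<Union>s\<in>steps True \<union> steps False. P s)"
    "\<And>s x. x \<in> P s \<Longrightarrow> s \<in> steps (x 0) \<and> act s x \<in> B (c x)"
proof -
  interpret A: algebra UNIV A
    by (fact A(1))
  define R where "R s = {x. act s x \<in> B (c x)}" for s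
  have R_A: "R s \<in> A" for s
  proof -
    have "R s = (\<Union>j\<in>{1..17}. {x. c x = j} \<inter> act s -` B j)"
      using c_range by (auto simp: R_def)
    also have "\<dots> \<in> A"
      using measurable_sets[OF measurable_act borel] classes A(2) by (intro A.finite_UN A.Int) auto
    finally show ?thesis .
  qed
  define E where "E = {x :: F2 \<Rightarrow> bool. x 0}"
  have E_A: "E \<in> A"
    using sets_m_coord[of "\<lambda>b. b" 0] A(2) by (auto simp: E_def)
  have "UNIV - E \<in> A"
    using A.compl_sets[OF E_A] by simp
  then have pieces_A: "E \<inter> R T1 \<in> A" "E - R T1 \<in> A" "(UNIV - E) \<inter> R T1i \<in> A" "(UNIV - E) - R T1i \<in> A"
    using E_A R_A by (simp_all add: A.Int A.Diff)
  define \<sigma> where "\<sigma> x = (if x 0 then if x \<in> R T1 then T1 else T2 else if x \<in> R T1i then T1i else T2i)" for x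
  have level_sets: "{x. \<sigma> x = T1} = E \<inter> R T1" "{x. \<sigma> x = T2} = E - R T1"
    "{x. \<sigma> x = T1i} = (UNIV - E) \<inter> R T1i" "{x. \<sigma> x = T2i} = (UNIV - E) - R T1i"
    using T_distinct by (auto simp: \<sigma>_def E_def)
  have \<sigma>_good: "\<sigma> x \<in> steps (x 0) \<and> x \<in> R (\<sigma> x)" if x: "x \<in> G" for x
  proof -
    obtain t where "t \<in> steps (x 0)" "c x = kappa B (act t x)"
      using G(2)[OF x] by (auto simp: Lst_def tset_eq)
    then have "t \<in> steps (x 0)" "x \<in> R t"
      using in_B_kappa act_in_Xp G(2)[OF x] by (auto simp: R_def)
    then show ?thesis
      by (auto simp: \<sigma>_def steps_def)
  qed
  define P where "P s = G \<inter> {x. \<sigma> x = s}" for s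
  show thesis
  proof
    show "P ` (steps True \<union> steps False) \<subseteq> A"
      using level_sets pieces_A G(1) by (auto simp: P_def steps_def intro: A.Int)
    show "disjoint_family_on P (steps True \<union> steps False)"
      by (auto simp: disjoint_family_on_def P_def)
    show "G = (\<Union>s\<in>steps True \<union> steps False. P s)"
      by (auto simp: P_def \<sigma>_def steps_def)
    show "s \<in> steps (x 0) \<and> act s x \<in> B (c x)" if "x \<in> P s" for s x
      using that \<sigma>_good by (auto simp: P_def R_def)
  qed
qed

lemma no_invariant_colouring:
  assumes borel: "\<And>j. j \<in> {1..17} \<Longrightarrow> B j \<in> sets m"
  shows "\<not> (\<exists>A \<mu> c. invariant_extension A \<mu> \<and> satisfies_rule B c \<and>
            (\<forall>j \<in> {1..17}. {x \<in> space m. c x = j} \<in> A))"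
proof
  assume "\<exists>A \<mu> c. invariant_extension A \<mu> \<and> satisfies_rule B c \<and>
            (\<forall>j \<in> {1..17}. {x \<in> space m. c x = j} \<in> A)"
  then obtain A \<mu> c where ext: "invariant_extension A \<mu>" and sat: "satisfies_rule B c"
    and classes: "\<And>j. j \<in> {1..17} \<Longrightarrow> {x. c x = j} \<in> A"
    by auto
  have A: "algebra UNIV A" "sets m \<subseteq> A"
    using invariant_extension_algebra[OF ext] invariant_extension_sets_m[OF ext] by auto
  interpret A: algebra UNIV A
    by (fact A(1))
  note \<mu>_m = invariant_extension_measure_m[OF ext]
  have c_range: "c x \<in> {1..17}" for x
    using sat by (simp add: satisfies_rule_def colouring_def)
  have "AE x in m. x \<in> Xp \<and> rule_at B c x"
    using sat AE_Xp by (auto simp: satisfies_rule_def)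
  then obtain G where G: "G \<subseteq> {x \<in> space m. x \<in> Xp \<and> rule_at B c x}" "G \<in> sets m" "measure m G = 1"
    by (rule m.AE_E_prob)
  have G_A: "G \<in> A"
    using G(2) A(2) by blast
  have G_rule: "x \<in> Xp \<and> c x \<in> Lst B x" if "x \<in> G" for x
    using G(1) that by (auto simp: rule_at_def)
  obtain P where P: "P ` (steps True \<union> steps False) \<subseteq> A"
    "disjoint_family_on P (steps True \<union> steps False)" "G = (\<Union>s\<in>steps True \<union> steps False. P s)"
    and P_steps: "\<And>s x. x \<in> P s \<Longrightarrow> s \<in> steps (x 0) \<and> act s x \<in> B (c x)"
    using step_partition[OF A borel classes c_range G_A G_rule] by blast
  have "x \<in> Xp \<and> rule_at B c x \<and> s \<in> steps (x 0) \<and> act s x \<in> B (c x)"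
    if "s \<in> steps True \<union> steps False" "x \<in> P s" for s x
    using that P(3) P_steps[OF that(2)] G(1) by auto
  note moved_disjoint = moved_pieces_disjoint[OF P(2) c_range this]
  have co_untargeted: "UNIV - untargeted \<in> sets m"
    using sets.compl_sets[OF sets_m_untargeted] by simp
  have "measure m G = \<mu> G"
    by (rule \<mu>_m[OF G(2), symmetric])
  also have "\<dots> = \<mu> (\<Union>s\<in>steps True \<union> steps False. P s)"
    by (simp only: P(3)[symmetric])
  also have "\<dots> = \<mu> (\<Union>s\<in>steps True \<union> steps False. act s ` P s)"
    by (rule invariant_extension_piecewise_act[OF ext _ P(1,2) moved_disjoint, symmetric])
      (simp add: steps_def)
  also have "\<dots> \<le> \<mu> (UNIV - untargeted)"
  proof (rule invariant_extension_mono[OF ext])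
    have "act s ` P s \<in> A" if "s \<in> steps True \<union> steps False" for s
      using P(1) that invariant_extension_act[OF ext] by blast
    then show "(\<Union>s\<in>steps True \<union> steps False. act s ` P s) \<in> A"
      by (intro A.finite_UN) (simp_all add: steps_def)
    show "UNIV - untargeted \<in> A"
      using co_untargeted A(2) by auto
    show "(\<Union>s\<in>steps True \<union> steps False. act s ` P s) \<subseteq> UNIV - untargeted"
      using P_steps step_notin_untargeted by blast
  qed
  also have "\<dots> = measure m (UNIV - untargeted)"
    by (rule \<mu>_m[OF co_untargeted])
  also have "\<dots> = 1 - 1/16"
    using m.prob_compl[OF sets_m_untargeted] measure_m_untargeted by simp
  finally show False
    using G(3) by simp
qed

end

theorem proposition4:
  fixes B :: "nat \<Rightarrow> (F2 \<Rightarrow> bool) set"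
  assumes borel: "\<And>j. j \<in> {1..17} \<Longrightarrow> B j \<in> sets m"
    and disj: "\<And>j k. j \<in> {1..17} \<Longrightarrow> k \<in> {1..17} \<Longrightarrow> j \<noteq> k \<Longrightarrow> B j \<inter> B k = {}"
    and cover: "(\<Union>j\<in>{1..17}. B j) = Xp"
    and sep: "\<And>g x j. g \<in> gs16 \<Longrightarrow> j \<in> {1..17} \<Longrightarrow> x \<in> Xp \<Longrightarrow> \<not> (x \<in> B j \<and> act g x \<in> B j)"
  shows "paradoxical B"
proof -
  interpret Xp_partition B
    using disj cover by unfold_locales
  show ?thesis
    unfolding paradoxical_def
    using colouring_exists[OF sep] no_invariant_colouring[OF borel] by blast
qed

end
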